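(* Let $\mathcal{C}$ be a binary linear LRC code of length $n$, locality $r$ and minimum distance $d$. Then $$\dim(\mathcal{C})\le\min_{1\le s\le n/(r+1)}\big(sr+\log_2M(n-s(r+1),d,r)\big),$$ where $M(m,d,r)$ is the maximum cardinality of a binary linear LRC code of length $m$, minimum distance $d$ and locality $r$. Consequently, $$R^{(\mathrm{lin})}(r,\delta)\le\min_{0\le\sigma<1/(r+1)}\Big\{\sigma r+(1-\sigma(r+1))\,R^{(\mathrm{lin})}\Big(r,\frac{\delta}{1-\sigma(r+1)}\Big)\Big\}.$$
   Context: A binary code $\mathcal{C}\subseteq\{0,1\}^n$ is an LRC code with locality $r$ if every coordinate $i\in[n]$ is contained in a subset $\mathcal{R}_i\subseteq[n]$ of size $r+1$ such that for some function $\phi_i:\{0,1\}^r\to\{0,1\}$, $c_i=\phi_i(c_{j_1},\dots,c_{j_r})$ for every codeword $c$, where $j_1<\dots<j_r$ are the elements of $\mathcal{R}_i\setminus\{i\}$. Let $M^{(\mathrm{lin})}(n,r,d)$ be the maximum cardinality of a binary linear code of length $n$, minimum Hamming distance $d$ and locality $r$, and $R^{(\mathrm{lin})}(r,\delta)=\limsup_{n\to\infty}\frac1n\log_2M^{(\mathrm{lin})}(n,r,\delta n)$. *)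

theory Defs
  imports "HOL-Analysis.Analysis"
begin

text \<open>Binary words of length n are boolean lists of length n; addition over GF(2) is xor.\<close>

definition hdist :: "bool list \<Rightarrow> bool list \<Rightarrow> nat" where
  "hdist x y = card {i. i < length x \<and> x ! i \<noteq> y ! i}"

definition is_binary_linear_code :: "nat \<Rightarrow> bool list set \<Rightarrow> bool" where
  "is_binary_linear_code n C \<longleftrightarrow>
     C \<subseteq> {x. length x = n} \<and> replicate n False \<in> C \<and>
     (\<forall>x\<in>C. \<forall>y\<in>C. map2 (\<lambda>a b. a \<noteq> b) x y \<in> C)"

definition has_locality :: "nat \<Rightarrow> nat \<Rightarrow> bool list set \<Rightarrow> bool" where
  "has_locality n r C \<longleftrightarrow>
     (\<forall>i<n. \<exists>R. i \<in> R \<and> R \<subseteq> {..<n} \<and> card R \<le> r + 1 \<and>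
        (\<exists>\<phi> :: bool list \<Rightarrow> bool. \<forall>c\<in>C.
            c ! i = \<phi> (map (\<lambda>j. c ! j) (sorted_list_of_set (R - {i})))))"

definition min_dist_ge :: "nat \<Rightarrow> bool list set \<Rightarrow> bool" where
  "min_dist_ge d C \<longleftrightarrow> (\<forall>x\<in>C. \<forall>y\<in>C. x \<noteq> y \<longrightarrow> d \<le> hdist x y)"

definition is_lin_LRC :: "nat \<Rightarrow> nat \<Rightarrow> nat \<Rightarrow> bool list set \<Rightarrow> bool" where
  "is_lin_LRC n r d C \<longleftrightarrow> is_binary_linear_code n C \<and> has_locality n r C \<and> min_dist_ge d C"

definition Mlin :: "nat \<Rightarrow> nat \<Rightarrow> nat \<Rightarrow> nat" where
  "Mlin n r d = Max (card ` {C. is_lin_LRC n r d C})"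

text \<open>R^(lin)(r,delta) = limsup (1/n) log2 M^(lin)(n, r, delta n); distance \<ge> delta n
  is the same as distance \<ge> ceiling(delta n).\<close>
definition Rlin :: "nat \<Rightarrow> real \<Rightarrow> ereal" where
  "Rlin r \<delta> = limsup (\<lambda>n. ereal (log 2 (real (Mlin n r (nat \<lceil>\<delta> * real n\<rceil>))) / real n))"

end

theory Submission
  imports Defs
begin

(*
  In a linear LRC C of length n >= r + 1, enlarge a repair set of one coordinate i to a set S of
  r + 1 coordinates. The codewords vanishing on S - {i} form a subcode of index at most 2^r, and
  by locality they also vanish at i; deleting the coordinates S from them gives a linear LRC of
  length n - (r + 1) with the same distance and locality. Iterating s times yields
  |C| <= 2^(sr) M(n - s(r + 1), d, r).

  For the rate bound take s = ceil(sigma n): the remaining length m is about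
  (1 - sigma(r + 1)) n, and the required distance delta n is at least delta / (1 - sigma(r + 1))
  times m, so log M(n) / n is eventually at most sigma r + (1 - sigma(r + 1)) times the rate at
  relative distance delta / (1 - sigma(r + 1)), up to any epsilon.
*)

abbreviation xor_word :: "bool list \<Rightarrow> bool list \<Rightarrow> bool list" where
  "xor_word x y \<equiv> map2 (\<lambda>a b. a \<noteq> b) x y"

lemma xor_word_cancel_right:
  assumes "length x = length z" "length y = length z" "xor_word x z = xor_word y z"
  shows "x = y"
proof (rule nth_equalityI)
  show "length x = length y" using assms by simp
  fix j assume "j < length x"
  then have "xor_word x z ! j = xor_word y z ! j" using assms(3) by simp
  then show "x ! j = y ! j" using assms \<open>j < length x\<close> by auto
qed

lemma finite_bool_lists_length: "finite {x :: bool list. length x = m}"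
  using finite_lists_length_eq[of "UNIV :: bool set" m] by simp

lemma card_bool_lists_length: "card {x :: bool list. length x = m} = 2 ^ m"
  using card_lists_length_eq[of "UNIV :: bool set" m] by simp

lemma ex_fun_of_coords_iff:
  "(\<exists>\<phi>. \<forall>c\<in>C. c ! i = \<phi> (map ((!) c) xs)) \<longleftrightarrow>
   (\<forall>c\<in>C. \<forall>c'\<in>C. (\<forall>j\<in>set xs. c ! j = c' ! j) \<longrightarrow> c ! i = c' ! i)"
proof
  assume "\<exists>\<phi>. \<forall>c\<in>C. c ! i = \<phi> (map ((!) c) xs)"
  then obtain \<phi> where \<phi>: "\<forall>c\<in>C. c ! i = \<phi> (map ((!) c) xs)" by blast
  show "\<forall>c\<in>C. \<forall>c'\<in>C. (\<forall>j\<in>set xs. c ! j = c' ! j) \<longrightarrow> c ! i = c' ! i"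
  proof (intro ballI impI)
    fix c c' assume "c \<in> C" "c' \<in> C" "\<forall>j\<in>set xs. c ! j = c' ! j"
    then show "c ! i = c' ! i" using \<phi> by (simp cong: map_cong)
  qed
next
  assume agree: "\<forall>c\<in>C. \<forall>c'\<in>C. (\<forall>j\<in>set xs. c ! j = c' ! j) \<longrightarrow> c ! i = c' ! i"
  define \<phi> where "\<phi> v = (SOME c. c \<in> C \<and> map ((!) c) xs = v) ! i" for v
  show "\<exists>\<phi>. \<forall>c\<in>C. c ! i = \<phi> (map ((!) c) xs)"
  proof (intro exI[of _ \<phi>] ballI)
    fix c assume c: "c \<in> C"
    define c' where "c' = (SOME c'. c' \<in> C \<and> map ((!) c') xs = map ((!) c) xs)"
    have "c' \<in> C \<and> map ((!) c') xs = map ((!) c) xs"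
      unfolding c'_def by (rule someI[of _ c]) (simp add: c)
    then have "c ! i = c' ! i" using agree c by (metis map_eq_conv)
    also have "\<dots> = \<phi> (map ((!) c) xs)" unfolding \<phi>_def c'_def ..
    finally show "c ! i = \<phi> (map ((!) c) xs)" .
  qed
qed

lemma has_locality_iff:
  "has_locality n r C \<longleftrightarrow>
   (\<forall>i<n. \<exists>R. i \<in> R \<and> R \<subseteq> {..<n} \<and> card R \<le> r + 1 \<and>
      (\<forall>c\<in>C. \<forall>c'\<in>C. (\<forall>j\<in>R - {i}. c ! j = c' ! j) \<longrightarrow> c ! i = c' ! i))"
proof -
  have "set (sorted_list_of_set (R - {i})) = R - {i}" if "R \<subseteq> {..<n}" for R i
    using that by (simp add: finite_subset)
  then show ?thesis
    unfolding has_locality_def ex_fun_of_coords_iff by (simp cong: conj_cong)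
qed

definition vanishing_subcode :: "bool list set \<Rightarrow> nat set \<Rightarrow> bool list set" where
  "vanishing_subcode C J = {c \<in> C. \<forall>j\<in>J. \<not> c ! j}"

lemma finite_binary_linear_code: "is_binary_linear_code n C \<Longrightarrow> finite C"
  unfolding is_binary_linear_code_def using finite_subset[OF _ finite_bool_lists_length] by blast

lemma card_le_vanishing_subcode:
  assumes lin: "is_binary_linear_code n C" and J: "J \<subseteq> {..<n}"
  shows "card C \<le> 2 ^ card J * card (vanishing_subcode C J)"
proof -
  define P where "P c = map ((!) c) (sorted_list_of_set J)" for c :: "bool list"
  define rep where "rep v = (SOME c. c \<in> C \<and> P c = v)" for v
  \<comment> \<open>Each fibre of P is a translate of the vanishing subcode, so f is injective.\<close>
  define f where "f c = (P c, xor_word c (rep (P c)))" for c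
  have words: "length c = n" if "c \<in> C" for c
    using lin that unfolding is_binary_linear_code_def by auto
  have rep: "rep (P c) \<in> C \<and> P (rep (P c)) = P c" if "c \<in> C" for c
  proof -
    have "c \<in> C \<and> P c = P c" using that by simp
    then show ?thesis unfolding rep_def by (rule someI)
  qed
  have "inj_on f C"
  proof (rule inj_onI)
    fix x y assume x: "x \<in> C" and y: "y \<in> C" and "f x = f y"
    then have "P x = P y" "xor_word x (rep (P x)) = xor_word y (rep (P x))"
      unfolding f_def by auto
    then show "x = y"
      using xor_word_cancel_right[of x "rep (P x)" y] words x y rep by simp
  qed
  moreover have "f ` C \<subseteq> P ` C \<times> vanishing_subcode C J"
  proof (rule image_subsetI)
    fix c assume c: "c \<in> C"
    have "P c = P (rep (P c))" using rep c by simp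
    then have "c ! j = rep (P c) ! j" if "j \<in> J" for j
      using that J unfolding P_def by (simp add: finite_subset)
    then have "xor_word c (rep (P c)) \<in> vanishing_subcode C J"
      using lin c rep[OF c] words J
      unfolding vanishing_subcode_def is_binary_linear_code_def by auto
    then show "f c \<in> P ` C \<times> vanishing_subcode C J" unfolding f_def using c by blast
  qed
  moreover have "finite (P ` C \<times> vanishing_subcode C J)"
    using finite_binary_linear_code[OF lin] by (simp add: vanishing_subcode_def)
  ultimately have "card C \<le> card (P ` C \<times> vanishing_subcode C J)"
    by (rule card_inj_on_le)
  also have "\<dots> = card (P ` C) * card (vanishing_subcode C J)"
    by (rule card_cartesian_product)
  also have "\<dots> \<le> 2 ^ card J * card (vanishing_subcode C J)"
  proof (rule mult_right_mono)
    have "P ` C \<subseteq> {x. length x = card J}" unfolding P_def by auto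
    then show "card (P ` C) \<le> 2 ^ card J"
      using card_mono[OF finite_bool_lists_length] card_bool_lists_length by metis
  qed simp
  finally show ?thesis .
qed

lemma has_locality_subset:
  assumes "has_locality n r C" and "C' \<subseteq> C"
  shows "has_locality n r C'"
  unfolding has_locality_def
proof (intro allI impI)
  fix i assume "i < n"
  obtain R where R: "i \<in> R" "R \<subseteq> {..<n}" "card R \<le> r + 1"
    and "\<exists>\<phi>. \<forall>c\<in>C. c ! i = \<phi> (map ((!) c) (sorted_list_of_set (R - {i})))"
    using assms(1)[unfolded has_locality_def, rule_format, OF \<open>i < n\<close>] by blast
  then obtain \<phi> where \<phi>: "\<forall>c\<in>C. c ! i = \<phi> (map ((!) c) (sorted_list_of_set (R - {i})))"
    by (elim exE)
  have "\<forall>c\<in>C'. c ! i = \<phi> (map ((!) c) (sorted_list_of_set (R - {i})))"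
    using \<phi> assms(2) by (simp add: subset_iff)
  then show "\<exists>R. i \<in> R \<and> R \<subseteq> {..<n} \<and> card R \<le> r + 1 \<and>
      (\<exists>\<phi>. \<forall>c\<in>C'. c ! i = \<phi> (map ((!) c) (sorted_list_of_set (R - {i}))))"
    using R by blast
qed

lemma is_lin_LRC_vanishing_subcode:
  assumes LRC: "is_lin_LRC n r d C" and J: "J \<subseteq> {..<n}"
  shows "is_lin_LRC n r d (vanishing_subcode C J)"
proof -
  have lin: "is_binary_linear_code n C" using LRC unfolding is_lin_LRC_def by simp
  have sub: "vanishing_subcode C J \<subseteq> C" unfolding vanishing_subcode_def by blast
  have words: "length c = n" if "c \<in> vanishing_subcode C J" for c
    using lin sub that unfolding is_binary_linear_code_def by auto
  have "is_binary_linear_code n (vanishing_subcode C J)"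
    unfolding is_binary_linear_code_def
  proof (intro conjI ballI)
    show "vanishing_subcode C J \<subseteq> {x. length x = n}" using words by blast
    show "replicate n False \<in> vanishing_subcode C J"
      using lin J unfolding is_binary_linear_code_def vanishing_subcode_def by (auto simp: subset_iff)
    fix x y assume x: "x \<in> vanishing_subcode C J" and y: "y \<in> vanishing_subcode C J"
    have "xor_word x y \<in> C" using lin x y sub unfolding is_binary_linear_code_def by blast
    moreover have "\<not> xor_word x y ! j" if "j \<in> J" for j
      using that J x y words[OF x] words[OF y] unfolding vanishing_subcode_def by auto
    ultimately show "xor_word x y \<in> vanishing_subcode C J" unfolding vanishing_subcode_def by blast
  qed
  moreover have "has_locality n r (vanishing_subcode C J)"
    using LRC has_locality_subset[OF _ sub] unfolding is_lin_LRC_def by simp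
  moreover have "min_dist_ge d (vanishing_subcode C J)"
    using LRC sub unfolding is_lin_LRC_def min_dist_ge_def by blast
  ultimately show ?thesis unfolding is_lin_LRC_def by blast
qed

definition punctured_coords :: "nat \<Rightarrow> nat set \<Rightarrow> nat list" where
  "punctured_coords n S = sorted_list_of_set ({..<n} - S)"

definition puncture :: "nat \<Rightarrow> nat set \<Rightarrow> bool list \<Rightarrow> bool list" where
  "puncture n S c = map ((!) c) (punctured_coords n S)"

lemma set_punctured_coords: "set (punctured_coords n S) = {..<n} - S"
  and distinct_punctured_coords: "distinct (punctured_coords n S)"
  unfolding punctured_coords_def by auto

lemma length_punctured_coords:
  "S \<subseteq> {..<n} \<Longrightarrow> length (punctured_coords n S) = n - card S"
  unfolding punctured_coords_def by (simp add: card_Diff_subset finite_subset)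

lemma nth_punctured_coords:
  "k < length (punctured_coords n S) \<Longrightarrow> punctured_coords n S ! k < n \<and> punctured_coords n S ! k \<notin> S"
  using nth_mem set_punctured_coords by blast

lemma length_puncture: "S \<subseteq> {..<n} \<Longrightarrow> length (puncture n S c) = n - card S"
  unfolding puncture_def by (simp add: length_punctured_coords)

lemma puncture_replicate:
  "S \<subseteq> {..<n} \<Longrightarrow> puncture n S (replicate n False) = replicate (n - card S) False"
  by (rule nth_equalityI) (auto simp: puncture_def length_punctured_coords nth_punctured_coords)

lemma puncture_xor_word:
  assumes "length x = n" "length y = n"
  shows "puncture n S (xor_word x y) = xor_word (puncture n S x) (puncture n S y)"
  by (rule nth_equalityI) (use assms nth_punctured_coords in \<open>auto simp: puncture_def\<close>)

lemma puncture_eq_iff: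
  assumes "length x = n" "length y = n" "\<forall>j\<in>S. \<not> x ! j" "\<forall>j\<in>S. \<not> y ! j"
  shows "puncture n S x = puncture n S y \<longleftrightarrow> x = y"
proof
  assume eq: "puncture n S x = puncture n S y"
  show "x = y"
  proof (rule nth_equalityI)
    show "length x = length y" using assms by simp
    fix j assume "j < length x"
    then show "x ! j = y ! j"
      using eq assms by (cases "j \<in> S") (auto simp: puncture_def map_eq_conv set_punctured_coords)
  qed
qed simp

lemma hdist_puncture:
  assumes S: "S \<subseteq> {..<n}" and len: "length x = n" "length y = n"
    and zero: "\<forall>j\<in>S. \<not> x ! j" "\<forall>j\<in>S. \<not> y ! j"
  shows "hdist (puncture n S x) (puncture n S y) = hdist x y"
proof -
  let ?K = "punctured_coords n S"
  let ?A = "{k. k < length ?K \<and> x ! (?K ! k) \<noteq> y ! (?K ! k)}"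
  have "{j. j < length x \<and> x ! j \<noteq> y ! j} = (!) ?K ` ?A"
  proof
    show "{j. j < length x \<and> x ! j \<noteq> y ! j} \<subseteq> (!) ?K ` ?A"
    proof
      fix j assume j: "j \<in> {j. j < length x \<and> x ! j \<noteq> y ! j}"
      then have "j \<in> set ?K" using zero len by (auto simp: set_punctured_coords)
      then obtain k where "k < length ?K" "j = ?K ! k" by (metis in_set_conv_nth)
      then show "j \<in> (!) ?K ` ?A" using j by auto
    qed
  qed (use len nth_punctured_coords in auto)
  moreover have "inj_on ((!) ?K) ?A"
    using inj_on_nth[OF distinct_punctured_coords, of ?A] by auto
  ultimately have "hdist x y = card ?A" unfolding hdist_def by (simp add: card_image)
  moreover have "hdist (puncture n S x) (puncture n S y) = card ?A"
    unfolding hdist_def puncture_def by (metis (no_types, lifting) length_map nth_map)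
  ultimately show ?thesis by simp
qed

lemma has_locality_puncture:
  assumes loc: "has_locality n r C" and S: "S \<subseteq> {..<n}" and zero: "\<forall>c\<in>C. \<forall>j\<in>S. \<not> c ! j"
  shows "has_locality (n - card S) r (puncture n S ` C)"
  unfolding has_locality_iff
proof (intro allI impI)
  let ?K = "punctured_coords n S"
  fix k assume "k < n - card S"
  then have k: "k < length ?K" using S by (simp add: length_punctured_coords)
  define j where "j = ?K ! k"
  have j: "j < n" "j \<notin> S" using nth_punctured_coords[OF k] j_def by auto
  obtain R where R: "j \<in> R" "R \<subseteq> {..<n}" "card R \<le> r + 1"
    and repair: "\<forall>c\<in>C. \<forall>c'\<in>C. (\<forall>l\<in>R - {j}. c ! l = c' ! l) \<longrightarrow> c ! j = c' ! j"
    using loc[unfolded has_locality_iff, rule_format, OF j(1)] by blast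
  define R' where "R' = {k'. k' < length ?K \<and> ?K ! k' \<in> R}"
  have R'_sub: "R' \<subseteq> {..<n - card S}"
    using S by (auto simp: R'_def length_punctured_coords)
  have "card R' = card ((!) ?K ` R')"
    using inj_on_nth[OF distinct_punctured_coords, of R'] by (simp add: R'_def card_image)
  also have "\<dots> \<le> card R"
    using R(2) by (intro card_mono) (auto simp: R'_def finite_subset)
  finally have card_R': "card R' \<le> r + 1" using R(3) by simp
  have k_R': "k \<in> R'" using k R(1) unfolding R'_def j_def by simp
  have repairs': "\<forall>x'\<in>puncture n S ` C. \<forall>y'\<in>puncture n S ` C.
      (\<forall>i\<in>R' - {k}. x' ! i = y' ! i) \<longrightarrow> x' ! k = y' ! k"
  proof (intro ballI impI)
    fix x' y' assume "x' \<in> puncture n S ` C" "y' \<in> puncture n S ` C"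
      and agree: "\<forall>i\<in>R' - {k}. x' ! i = y' ! i"
    then obtain x y where x: "x \<in> C" "x' = puncture n S x" and y: "y \<in> C" "y' = puncture n S y"
      by blast
    then have agree_punctured: "\<forall>i\<in>R' - {k}. puncture n S x ! i = puncture n S y ! i"
      using agree by simp
    have "x ! l = y ! l" if l: "l \<in> R - {j}" for l
    proof (cases "l \<in> S")
      case True then show ?thesis using zero x y by simp
    next
      case False
      then have "l \<in> set ?K" using l R(2) by (auto simp: set_punctured_coords)
      then obtain k' where k': "k' < length ?K" "l = ?K ! k'" by (metis in_set_conv_nth)
      then have "k' \<in> R' - {k}" using l j_def by (auto simp: R'_def)
      then have "puncture n S x ! k' = puncture n S y ! k'" using agree_punctured by blast
      then show ?thesis using k' by (simp add: puncture_def)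
    qed
    then have "x ! j = y ! j" using repair x y by blast
    then show "x' ! k = y' ! k" using k j_def x y by (simp add: puncture_def)
  qed
  show "\<exists>R'. k \<in> R' \<and> R' \<subseteq> {..<n - card S} \<and> card R' \<le> r + 1 \<and>
      (\<forall>x'\<in>puncture n S ` C. \<forall>y'\<in>puncture n S ` C.
         (\<forall>i\<in>R' - {k}. x' ! i = y' ! i) \<longrightarrow> x' ! k = y' ! k)"
    by (intro exI[of _ R'] conjI k_R' R'_sub card_R' repairs')
qed

lemma is_lin_LRC_puncture:
  assumes LRC: "is_lin_LRC n r d C" and S: "S \<subseteq> {..<n}" and zero: "\<forall>c\<in>C. \<forall>j\<in>S. \<not> c ! j"
  shows "is_lin_LRC (n - card S) r d (puncture n S ` C)" and "card (puncture n S ` C) = card C"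
proof -
  have lin: "is_binary_linear_code n C" and loc: "has_locality n r C" and dist: "min_dist_ge d C"
    using LRC unfolding is_lin_LRC_def by auto
  have words: "length c = n" if "c \<in> C" for c
    using lin that unfolding is_binary_linear_code_def by auto
  have inj: "inj_on (puncture n S) C"
  proof (rule inj_onI)
    fix x y assume "x \<in> C" "y \<in> C" "puncture n S x = puncture n S y"
    then show "x = y" using puncture_eq_iff[of x n y S] words zero by simp
  qed
  then show "card (puncture n S ` C) = card C" by (rule card_image)
  have "is_binary_linear_code (n - card S) (puncture n S ` C)"
    unfolding is_binary_linear_code_def
  proof (intro conjI ballI)
    show "puncture n S ` C \<subseteq> {x. length x = n - card S}" using S by (auto simp: length_puncture)
    have "puncture n S (replicate n False) \<in> puncture n S ` C"
      using lin unfolding is_binary_linear_code_def by blast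
    then show "replicate (n - card S) False \<in> puncture n S ` C"
      by (simp add: puncture_replicate[OF S])
    fix x' y' assume "x' \<in> puncture n S ` C" "y' \<in> puncture n S ` C"
    then obtain x y where xy: "x \<in> C" "y \<in> C" and "x' = puncture n S x" "y' = puncture n S y"
      by blast
    moreover have "puncture n S (xor_word x y) \<in> puncture n S ` C"
      using lin xy unfolding is_binary_linear_code_def by blast
    ultimately show "xor_word x' y' \<in> puncture n S ` C"
      using puncture_xor_word[OF words[OF xy(1)] words[OF xy(2)]] by simp
  qed
  moreover have "min_dist_ge d (puncture n S ` C)"
    unfolding min_dist_ge_def
  proof (intro ballI impI)
    fix x' y' assume x': "x' \<in> puncture n S ` C" and y': "y' \<in> puncture n S ` C"
      and "x' \<noteq> y'"
    obtain x where x: "x \<in> C" "x' = puncture n S x" using x' by blast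
    obtain y where y: "y \<in> C" "y' = puncture n S y" using y' by blast
    have "x \<noteq> y" using \<open>x' \<noteq> y'\<close> x(2) y(2) by auto
    then have "d \<le> hdist x y" using dist x(1) y(1) unfolding min_dist_ge_def by blast
    then show "d \<le> hdist x' y'"
      using hdist_puncture[OF S words[OF x(1)] words[OF y(1)]] zero x y by simp
  qed
  ultimately show "is_lin_LRC (n - card S) r d (puncture n S ` C)"
    using has_locality_puncture[OF loc S zero] by (simp add: is_lin_LRC_def)
qed

lemma exists_shortened_lin_LRC:
  assumes LRC: "is_lin_LRC n r d C" and n: "r + 1 \<le> n"
  obtains C' where "is_lin_LRC (n - (r + 1)) r d C'" "card C \<le> 2 ^ r * card C'"
proof -
  have lin: "is_binary_linear_code n C" and loc: "has_locality n r C"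
    using LRC unfolding is_lin_LRC_def by simp_all
  obtain R where R: "0 \<in> R" "R \<subseteq> {..<n}" "card R \<le> r + 1"
    and repair: "\<forall>c\<in>C. \<forall>c'\<in>C. (\<forall>j\<in>R - {0}. c ! j = c' ! j) \<longrightarrow> c ! 0 = c' ! 0"
    using loc[unfolded has_locality_iff, rule_format, of 0] n by auto
  obtain S where S: "R \<subseteq> S" "S \<subseteq> {..<n}" "card S = r + 1"
  proof -
    have "r + 1 - card R \<le> card ({..<n} - R)"
      using R n by (simp add: card_Diff_subset finite_subset)
    then obtain T where T: "T \<subseteq> {..<n} - R" "card T = r + 1 - card R"
      by (meson obtain_subset_with_card_n)
    have "card (R \<union> T) = r + 1"
      using T R(2,3) by (subst card_Un_disjoint) (auto intro: finite_subset)
    then show ?thesis using that[of "R \<union> T"] T R(2) by blast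
  qed
  define C0 where "C0 = vanishing_subcode C (S - {0})"
  have S0: "S - {0} \<subseteq> {..<n}" using S(2) by blast
  have "0 \<in> S" using S(1) R(1) by blast
  then have "card (S - {0}) = r" using S(3) finite_subset[OF S(2)] by (simp add: card_Diff_singleton)
  then have card_C: "card C \<le> 2 ^ r * card C0"
    using card_le_vanishing_subcode[OF lin S0] unfolding C0_def by simp
  have LRC0: "is_lin_LRC n r d C0"
    using is_lin_LRC_vanishing_subcode[OF LRC S0] unfolding C0_def .
  \<comment> \<open>The words of C0 agree with the zero word on R - {0}, so by locality also at 0.\<close>
  have zero: "\<forall>c\<in>C0. \<forall>j\<in>S. \<not> c ! j"
  proof (intro ballI)
    fix c j assume c: "c \<in> C0" and j: "j \<in> S"
    have cC: "c \<in> C" and c_S: "\<forall>l\<in>S - {0}. \<not> c ! l"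
      using c unfolding C0_def vanishing_subcode_def by auto
    have zero_word: "replicate n False \<in> C" using lin unfolding is_binary_linear_code_def by simp
    have agree: "c ! l = replicate n False ! l" if "l \<in> R - {0}" for l
      using that c_S S(1) R(2) by auto
    have "c ! 0 = replicate n False ! 0"
      using repair[rule_format, OF cC zero_word agree] .
    then have "\<not> c ! 0" using n by simp
    then show "\<not> c ! j" using c_S j by (cases "j = 0") auto
  qed
  show ?thesis
  proof (rule that)
    show "is_lin_LRC (n - (r + 1)) r d (puncture n S ` C0)"
      using is_lin_LRC_puncture(1)[OF LRC0 S(2) zero] S(3) by simp
    show "card C \<le> 2 ^ r * card (puncture n S ` C0)"
      using card_C is_lin_LRC_puncture(2)[OF LRC0 S(2) zero] by simp
  qed
qed

lemma lin_LRC_words: "is_lin_LRC m r d C \<Longrightarrow> C \<subseteq> {x. length x = m}"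
  unfolding is_lin_LRC_def is_binary_linear_code_def by auto

lemma card_lin_LRC_pos: "is_lin_LRC m r d C \<Longrightarrow> 0 < card C"
  unfolding is_lin_LRC_def
  by (metis finite_binary_linear_code card_gt_0_iff empty_iff is_binary_linear_code_def)

lemma card_lin_LRC_le: "is_lin_LRC m r d C \<Longrightarrow> card C \<le> 2 ^ m"
  using lin_LRC_words card_bool_lists_length finite_bool_lists_length by (metis card_mono)

lemma zero_code_is_lin_LRC: "is_lin_LRC m r d {replicate m False}"
  unfolding is_lin_LRC_def is_binary_linear_code_def has_locality_iff min_dist_ge_def
  by (auto simp: map2_map_map[symmetric] intro!: exI[of _ "{_}"])

lemma finite_lin_LRCs: "finite {C. is_lin_LRC m r d C}"
  using lin_LRC_words finite_bool_lists_length
  by (metis (mono_tags, lifting) Pow_iff finite_Pow_iff finite_subset mem_Collect_eq subsetI)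

lemma card_le_Mlin: "is_lin_LRC m r d C \<Longrightarrow> card C \<le> Mlin m r d"
  unfolding Mlin_def using finite_lin_LRCs by (intro Max_ge) auto

lemma Mlin_attained: "\<exists>C. is_lin_LRC m r d C \<and> card C = Mlin m r d"
proof -
  have "Mlin m r d \<in> card ` {C. is_lin_LRC m r d C}"
    unfolding Mlin_def using zero_code_is_lin_LRC finite_lin_LRCs by (intro Max_in) auto
  then show ?thesis by auto
qed

lemma Mlin_pos: "0 < Mlin m r d"
  using Mlin_attained card_lin_LRC_pos by metis

lemma Mlin_le: "Mlin m r d \<le> 2 ^ m"
  using Mlin_attained card_lin_LRC_le by metis

lemma Mlin_antimono:
  assumes "d \<le> d'"
  shows "Mlin m r d' \<le> Mlin m r d"
proof -
  obtain C where C: "is_lin_LRC m r d' C" "card C = Mlin m r d'" using Mlin_attained by blast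
  then have "is_lin_LRC m r d C"
    using assms unfolding is_lin_LRC_def min_dist_ge_def by (meson order_trans)
  then show ?thesis using C(2) card_le_Mlin by metis
qed

lemma card_le_shortened_Mlin:
  "is_lin_LRC n r d C \<Longrightarrow> s * (r + 1) \<le> n \<Longrightarrow> card C \<le> 2 ^ (s * r) * Mlin (n - s * (r + 1)) r d"
proof (induction s arbitrary: n C)
  case 0
  then show ?case using card_le_Mlin by simp
next
  case (Suc s)
  have "r + 1 \<le> n" using Suc.prems(2) by simp
  then obtain C' where C': "is_lin_LRC (n - (r + 1)) r d C'" "card C \<le> 2 ^ r * card C'"
    using exists_shortened_lin_LRC[OF Suc.prems(1)] by blast
  have "s * (r + 1) \<le> n - (r + 1)" using Suc.prems(2) by simp
  then have "card C' \<le> 2 ^ (s * r) * Mlin (n - (r + 1) - s * (r + 1)) r d"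
    by (rule Suc.IH[OF C'(1)])
  also have "n - (r + 1) - s * (r + 1) = n - Suc s * (r + 1)" by (simp add: algebra_simps)
  finally have "2 ^ r * card C' \<le> 2 ^ r * (2 ^ (s * r) * Mlin (n - Suc s * (r + 1)) r d)"
    by (rule mult_le_mono2)
  also have "\<dots> = 2 ^ (Suc s * r) * Mlin (n - Suc s * (r + 1)) r d"
    by (simp add: power_add)
  finally show ?case using C'(2) by (rule order_trans[rotated])
qed

lemma log_card_le_shortened_Mlin:
  assumes "is_lin_LRC n r d C" "s * (r + 1) \<le> n"
  shows "log 2 (card C) \<le> real (s * r) + log 2 (Mlin (n - s * (r + 1)) r d)"
proof -
  have "real (card C) \<le> 2 ^ (s * r) * real (Mlin (n - s * (r + 1)) r d)"
    using card_le_shortened_Mlin[OF assms] by (metis of_nat_le_iff of_nat_mult of_nat_numeral of_nat_power)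
  then have "log 2 (card C) \<le> log 2 (2 ^ (s * r) * real (Mlin (n - s * (r + 1)) r d))"
    using card_lin_LRC_pos[OF assms(1)] by simp
  also have "\<dots> = real (s * r) + log 2 (Mlin (n - s * (r + 1)) r d)"
    using Mlin_pos by (simp add: log_mult log_nat_power)
  finally show ?thesis .
qed

lemma log_Mlin_nonneg: "0 \<le> log 2 (Mlin m r d)"
  using Mlin_pos[of m r d] by simp

lemma log_Mlin_le_length: "log 2 (Mlin m r d) \<le> m"
proof -
  have "real (Mlin m r d) \<le> 2 ^ m"
    using Mlin_le[of m r d] by (metis of_nat_le_iff of_nat_numeral of_nat_power)
  then have "log 2 (Mlin m r d) \<le> log 2 (2 ^ m)"
    using Mlin_pos[of m r d] by (subst log_le_cancel_iff) auto
  then show ?thesis by (simp add: log_nat_power)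
qed

lemma Rlin_real:
  obtains \<rho> where "Rlin r \<delta> = ereal \<rho>" and "0 \<le> \<rho>"
proof -
  define rate where "rate n = log 2 (Mlin n r (nat \<lceil>\<delta> * real n\<rceil>)) / real n" for n :: nat
  have "0 \<le> rate n" "rate n \<le> 1" for n
    using log_Mlin_nonneg log_Mlin_le_length unfolding rate_def
    by (auto simp: divide_le_eq_1)
  then have "Rlin r \<delta> \<le> 1" "0 \<le> Rlin r \<delta>"
    unfolding Rlin_def rate_def[symmetric]
    by (auto intro!: Limsup_bounded le_Limsup)
  then show ?thesis using that by (cases "Rlin r \<delta>") auto
qed

lemma log_Mlin_le_shortened:
  assumes "s * (r + 1) \<le> n" and "d' \<le> d"
  shows "log 2 (Mlin n r d) \<le> real (s * r) + log 2 (Mlin (n - s * (r + 1)) r d')"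
proof -
  obtain C where C: "is_lin_LRC n r d C" "card C = Mlin n r d" using Mlin_attained by blast
  have "log 2 (Mlin n r d) \<le> real (s * r) + log 2 (Mlin (n - s * (r + 1)) r d)"
    using log_card_le_shortened_Mlin[OF C(1) assms(1)] C(2) by simp
  also have "\<dots> \<le> real (s * r) + log 2 (Mlin (n - s * (r + 1)) r d')"
    using Mlin_antimono[OF assms(2)] Mlin_pos by simp
  finally show ?thesis .
qed

lemma log_Mlin_le_shortened_fraction:
  fixes \<sigma> \<tau> \<delta> :: real
  assumes \<delta>: "0 \<le> \<delta>" and \<sigma>: "0 \<le> \<sigma>" and \<tau>: "\<tau> = 1 - \<sigma> * real (r + 1)" "0 < \<tau>"
    and n: "real (r + 1) \<le> \<tau> * real n"
  obtains m where "\<tau> * real n - real (r + 1) \<le> real m" and "real m \<le> \<tau> * real n"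
    and "log 2 (Mlin n r (nat \<lceil>\<delta> * real n\<rceil>))
           \<le> (\<sigma> * real n + 1) * real r + log 2 (Mlin m r (nat \<lceil>\<delta> / \<tau> * real m\<rceil>))"
proof -
  define s where "s = nat \<lceil>\<sigma> * real n\<rceil>"
  have "real s = of_int \<lceil>\<sigma> * real n\<rceil>" unfolding s_def using \<sigma> by simp
  then have s: "\<sigma> * real n \<le> real s" "real s \<le> \<sigma> * real n + 1" by linarith+
  then have "real s * real (r + 1) \<le> (\<sigma> * real n + 1) * real (r + 1)"
    by (intro mult_right_mono) auto
  also have "\<dots> = real n - \<tau> * real n + real (r + 1)"
    unfolding \<tau> by (simp add: algebra_simps)
  finally have s_upper: "real s * real (r + 1) \<le> real n - \<tau> * real n + real (r + 1)" .
  then have "real (s * (r + 1)) \<le> real n" using n by (simp only: of_nat_mult)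
  then have "s * (r + 1) \<le> n" by (simp only: of_nat_le_iff)
  define m where "m = n - s * (r + 1)"
  have m: "real m = real n - real s * real (r + 1)"
    unfolding m_def using \<open>s * (r + 1) \<le> n\<close> by (simp add: of_nat_diff algebra_simps)
  have "\<sigma> * real n * real (r + 1) \<le> real s * real (r + 1)"
    using s by (intro mult_right_mono) auto
  then have m_upper: "real m \<le> \<tau> * real n"
    unfolding m \<tau> by (simp add: algebra_simps)
  have "\<delta> / \<tau> * real m \<le> \<delta> / \<tau> * (\<tau> * real n)"
    using m_upper \<delta> \<tau>(2) by (intro mult_left_mono) auto
  then have "nat \<lceil>\<delta> / \<tau> * real m\<rceil> \<le> nat \<lceil>\<delta> * real n\<rceil>"
    using \<tau>(2) by (intro nat_mono ceiling_mono) simp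
  then have "log 2 (Mlin n r (nat \<lceil>\<delta> * real n\<rceil>))
      \<le> real (s * r) + log 2 (Mlin m r (nat \<lceil>\<delta> / \<tau> * real m\<rceil>))"
    unfolding m_def by (rule log_Mlin_le_shortened[OF \<open>s * (r + 1) \<le> n\<close>])
  also have "real (s * r) \<le> (\<sigma> * real n + 1) * real r"
    using s by (simp add: mult_right_mono)
  finally show ?thesis
    using that[of m] m s_upper m_upper by simp
qed

lemma log_Mlin_eq_mult_rate: "log 2 (Mlin m r d) = real m * (log 2 (Mlin m r d) / real m)"
  using log_Mlin_le_length[of m r d] log_Mlin_nonneg[of m r d] by (cases "m = 0") auto

lemma eventually_rate_le:
  fixes \<sigma> \<delta> \<rho> e :: real and r :: nat
  defines "\<tau> \<equiv> 1 - \<sigma> * real (r + 1)"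
  assumes \<delta>: "0 \<le> \<delta>" and \<sigma>: "0 \<le> \<sigma>" "\<sigma> < 1 / real (r + 1)"
    and \<rho>: "Rlin r (\<delta> / \<tau>) = ereal \<rho>" "0 \<le> \<rho>" and e: "0 < e"
  shows "eventually (\<lambda>n. log 2 (Mlin n r (nat \<lceil>\<delta> * real n\<rceil>)) / real n
            \<le> \<sigma> * real r + \<tau> * \<rho> + e) sequentially"
proof -
  have \<tau>: "0 < \<tau>" "\<tau> \<le> 1" using \<sigma> unfolding \<tau>_def by (simp_all add: field_simps)
  \<comment> \<open>Half of e absorbs the slack of the shortened rate, the other half the rounding term r / n.\<close>
  define \<epsilon> where "\<epsilon> = e / (2 * \<tau>)"
  have \<epsilon>: "0 < \<epsilon>" "\<tau> * \<epsilon> = e / 2" using e \<tau> unfolding \<epsilon>_def by simp_all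
  have "eventually (\<lambda>m. ereal (log 2 (Mlin m r (nat \<lceil>\<delta> / \<tau> * real m\<rceil>)) / real m)
          < ereal (\<rho> + \<epsilon>)) sequentially"
    using \<rho>(1) \<epsilon>(1) unfolding Rlin_def by (intro Limsup_lessD) simp
  then obtain M where "\<And>m. M \<le> m \<Longrightarrow>
      log 2 (Mlin m r (nat \<lceil>\<delta> / \<tau> * real m\<rceil>)) / real m < \<rho> + \<epsilon>"
    unfolding eventually_sequentially by auto
  then have M: "log 2 (Mlin m r (nat \<lceil>\<delta> / \<tau> * real m\<rceil>)) \<le> real m * (\<rho> + \<epsilon>)"
    if "M \<le> m" for m
    using that log_Mlin_eq_mult_rate[of m r] by (metis less_imp_le mult_left_mono of_nat_0_le_iff)
  have large: "eventually (\<lambda>n. Z \<le> real n) sequentially" for Z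
    using filterlim_real_sequentially unfolding filterlim_at_top by blast
  show ?thesis
    using eventually_conj[OF large large]
  proof (rule eventually_mono)
    fix n assume n: "(real M + real (r + 1)) / \<tau> \<le> real n \<and> 2 * real r / e + 1 \<le> real n"
    have n_large: "real M + real (r + 1) \<le> \<tau> * real n" using n \<tau> by (simp add: field_simps)
    then have "real (r + 1) \<le> \<tau> * real n" by simp
    then obtain m where m: "\<tau> * real n - real (r + 1) \<le> real m" "real m \<le> \<tau> * real n"
      and bound: "log 2 (Mlin n r (nat \<lceil>\<delta> * real n\<rceil>))
           \<le> (\<sigma> * real n + 1) * real r + log 2 (Mlin m r (nat \<lceil>\<delta> / \<tau> * real m\<rceil>))"
      by (rule log_Mlin_le_shortened_fraction[OF \<delta> \<sigma>(1) \<tau>_def[THEN meta_eq_to_obj_eq] \<tau>(1)])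
    have "log 2 (Mlin m r (nat \<lceil>\<delta> / \<tau> * real m\<rceil>)) \<le> \<tau> * real n * (\<rho> + \<epsilon>)"
      using M[of m] m \<rho>(2) \<epsilon>(1) n_large
      by (smt (verit) mult_right_mono of_nat_le_iff)
    also have "\<tau> * real n * (\<rho> + \<epsilon>) = \<tau> * \<rho> * real n + (\<tau> * \<epsilon>) * real n"
      by (simp add: algebra_simps)
    finally have "log 2 (Mlin m r (nat \<lceil>\<delta> / \<tau> * real m\<rceil>)) \<le> \<tau> * \<rho> * real n + e / 2 * real n"
      unfolding \<epsilon>(2) .
    with bound have "log 2 (Mlin n r (nat \<lceil>\<delta> * real n\<rceil>))
        \<le> (\<sigma> * real n + 1) * real r + (\<tau> * \<rho> * real n + e / 2 * real n)"
      by linarith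
    also have "\<dots> \<le> (\<sigma> * real r + \<tau> * \<rho> + e) * real n"
    proof -
      have "real r \<le> e / 2 * real n" using n e by (simp add: field_simps)
      then show ?thesis by (simp add: algebra_simps)
    qed
    moreover have "0 < real n" using n e by (smt (verit) divide_nonneg_nonneg of_nat_0_le_iff)
    ultimately show "log 2 (Mlin n r (nat \<lceil>\<delta> * real n\<rceil>)) / real n \<le> \<sigma> * real r + \<tau> * \<rho> + e"
      by (simp add: pos_divide_le_eq)
  qed
qed

lemma Rlin_le_shortened_Rlin:
  fixes \<sigma> \<delta> :: real
  assumes "0 \<le> \<delta>" and "0 \<le> \<sigma>" and "\<sigma> < 1 / real (r + 1)"
  shows "Rlin r \<delta> \<le> ereal (\<sigma> * real r)
           + ereal (1 - \<sigma> * real (r + 1)) * Rlin r (\<delta> / (1 - \<sigma> * real (r + 1)))"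
proof -
  define \<tau> where "\<tau> = 1 - \<sigma> * real (r + 1)"
  obtain \<rho> where \<rho>: "Rlin r (\<delta> / \<tau>) = ereal \<rho>" "0 \<le> \<rho>" by (rule Rlin_real)
  have "Rlin r \<delta> \<le> ereal (\<sigma> * real r + \<tau> * \<rho>)"
  proof (rule ereal_le_epsilon2)
    fix e :: real assume "0 < e"
    have "Rlin r \<delta> \<le> ereal (\<sigma> * real r + \<tau> * \<rho> + e)"
      unfolding Rlin_def
      using eventually_rate_le[OF assms \<rho>[unfolded \<tau>_def] \<open>0 < e\<close>]
      by (intro Limsup_bounded) (simp add: \<tau>_def)
    then show "Rlin r \<delta> \<le> ereal (\<sigma> * real r + \<tau> * \<rho>) + ereal e" by simp
  qed
  then show ?thesis using \<rho> unfolding \<tau>_def by simp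
qed

theorem theorem7:
  shows "(\<forall>(n::nat) (r::nat) (d::nat) (C::bool list set) (s::nat).
            is_lin_LRC n r d C \<longrightarrow> 1 \<le> s \<longrightarrow> s * (r + 1) \<le> n \<longrightarrow>
            log 2 (real (card C)) \<le> real (s * r) + log 2 (real (Mlin (n - s * (r + 1)) r d)))
       \<and> (\<forall>(r::nat) (\<delta>::real) (\<sigma>::real).
            0 \<le> \<delta> \<longrightarrow> \<delta> \<le> 1 \<longrightarrow> 0 \<le> \<sigma> \<longrightarrow> \<sigma> < 1 / real (r + 1) \<longrightarrow>
            Rlin r \<delta> \<le> ereal (\<sigma> * real r)
                 + ereal (1 - \<sigma> * real (r + 1)) * Rlin r (\<delta> / (1 - \<sigma> * real (r + 1))))"
proof (intro conjI allI impI)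
  fix n r d :: nat and C :: "bool list set" and s :: nat
  assume "is_lin_LRC n r d C" and "s * (r + 1) \<le> n"
  then show "log 2 (real (card C)) \<le> real (s * r) + log 2 (real (Mlin (n - s * (r + 1)) r d))"
    by (rule log_card_le_shortened_Mlin)
next
  fix r :: nat and \<delta> \<sigma> :: real
  assume "0 \<le> \<delta>" and "0 \<le> \<sigma>" and "\<sigma> < 1 / real (r + 1)"
  then show "Rlin r \<delta> \<le> ereal (\<sigma> * real r)
      + ereal (1 - \<sigma> * real (r + 1)) * Rlin r (\<delta> / (1 - \<sigma> * real (r + 1)))"
    by (rule Rlin_le_shortened_Rlin)
qed

end
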